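(* Assume $\delta=d$, $\gamma\ge1$ and $\alpha>0$. Then $\lim_{n\to\infty}d^{-n}\log^+|Q_z^n(w)|=+\infty$ for every $(z,w)\in A_f$, and $$\limsup_{n\to\infty}\frac{1}{d^n}\log^+|Q_z^n(w)|\le\alpha G_p(z)\quad\text{for every }(z,w)\in B_f.$$
   Context: Let $p(z)=z^d+O(z^{d-1})$ be a monic polynomial of degree $\delta=d\ge 2$, and let $q(z,w)=b(z)w^d+(\text{terms of lower degree in } w)$ be a polynomial with $\deg_w q=d$, where $b$ is a monic polynomial of degree $\gamma$. Let $f(z,w)=(p(z),q(z,w))$. Write $Q_z^n=q_{p^{n-1}(z)}\circ\cdots\circ q_{p(z)}\circ q_z$ with $q_z=q(z,\cdot)$, so $f^n(z,w)=(p^n(z),Q_z^n(w))$. Let $A_p=\{z: p^n(z)\to\infty\}$ and $G_p(z)=\lim_n d^{-n}\log^+|p^n(z)|$. Define $\alpha=\max\{(n_j-\gamma)/(d-m_j)\}$ over monomials $z^{n_j}w^{m_j}$ appearing in $q$ with nonzero coefficient and $m_j<d$, and $\alpha=-\infty$ if $q=b(z)w^d$. Let $W_R=\{(z,w):|z|>R,\ |w|>R|z|^\alpha\}$ (if $\alpha=-\infty$: $\{|z|>R,\ w\ne0\}$), fix $R>1$ large enough that $f(W_R)\subset W_R$ and $W_R\subset A_p\times\mathbb{C}$, and set $A_f=\bigcup_{n\ge0}f^{-n}(W_R)$, $B_f=(A_p\times\mathbb{C})\setminus A_f$. *)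

theory Defs
  imports "HOL-Analysis.Analysis" "HOL-Computational_Algebra.Polynomial"
begin

definition qeval :: "(nat \<Rightarrow> nat \<Rightarrow> complex) \<Rightarrow> complex \<Rightarrow> complex \<Rightarrow> complex" where
  "qeval c z w = (\<Sum>(i,j)\<in>{(i,j). c i j \<noteq> 0}. c i j * z ^ i * w ^ j)"

definition logplus :: "real \<Rightarrow> real" where
  "logplus x = max 0 (ln x)"

fun Qiter :: "complex poly \<Rightarrow> (nat \<Rightarrow> nat \<Rightarrow> complex) \<Rightarrow> nat \<Rightarrow> complex \<Rightarrow> complex \<Rightarrow> complex" where
  "Qiter p c 0 z w = w"
| "Qiter p c (Suc n) z w = qeval c ((poly p ^^ n) z) (Qiter p c n z w)"

definition skew :: "complex poly \<Rightarrow> (nat \<Rightarrow> nat \<Rightarrow> complex) \<Rightarrow> complex \<times> complex \<Rightarrow> complex \<times> complex" where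
  "skew p c = (\<lambda>(z,w). (poly p z, qeval c z w))"

text \<open>alpha = max (n_j - gamma)/(d - m_j) over monomials with m_j < d (set assumed nonempty).\<close>
definition alpha :: "(nat \<Rightarrow> nat \<Rightarrow> complex) \<Rightarrow> nat \<Rightarrow> nat \<Rightarrow> real" where
  "alpha c d \<gamma> = Max ((\<lambda>(i,j). (real i - real \<gamma>) / (real d - real j)) ` {(i,j). c i j \<noteq> 0 \<and> j < d})"

definition escape_set :: "complex poly \<Rightarrow> complex set" where
  "escape_set p = {z. filterlim (\<lambda>n. (poly p ^^ n) z) at_infinity sequentially}"

definition Green_p :: "complex poly \<Rightarrow> nat \<Rightarrow> complex \<Rightarrow> real" where
  "Green_p p d z = lim (\<lambda>n. logplus (cmod ((poly p ^^ n) z)) / real d ^ n)"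

definition W_R :: "real \<Rightarrow> real \<Rightarrow> (complex \<times> complex) set" where
  "W_R R a = {(z,w). R < cmod z \<and> R * cmod z powr a < cmod w}"

definition A_f :: "complex poly \<Rightarrow> (nat \<Rightarrow> nat \<Rightarrow> complex) \<Rightarrow> real \<Rightarrow> real \<Rightarrow> (complex \<times> complex) set" where
  "A_f p c R a = (\<Union>n. (skew p c ^^ n) -` W_R R a)"

definition B_f :: "complex poly \<Rightarrow> (nat \<Rightarrow> nat \<Rightarrow> complex) \<Rightarrow> real \<Rightarrow> real \<Rightarrow> (complex \<times> complex) set" where
  "B_f p c R a = (escape_set p \<times> UNIV) - A_f p c R a"

end

theory Submission
  imports Defs "HOL-Complex_Analysis.Conformal_Mappings"
begin

text \<open>
  Write \<open>(z\<^sub>n, w\<^sub>n) = f\<^sup>n(z, w)\<close>. For large \<open>|z|\<close> and \<open>|w| \<ge> K |z|\<^sup>\<alpha>\<close> the monomial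
  \<open>z\<^sup>\<gamma> w\<^sup>d\<close> dominates \<open>q(z, w)\<close>; this is what the exponent \<open>\<alpha>\<close> is designed for.

  Outside \<open>A\<^sub>f\<close> the orbit never enters \<open>W\<^sub>R\<close>, so \<open>|w\<^sub>n| \<le> R |z\<^sub>n|\<^sup>\<alpha>\<close> as soon as
  \<open>|z\<^sub>n| > R\<close>, and \<open>d\<^sup>-\<^sup>n log\<^sup>+ |w\<^sub>n|\<close> is bounded by \<open>d\<^sup>-\<^sup>n log R + \<alpha> d\<^sup>-\<^sup>n log |z\<^sub>n|\<close>,
  which tends to \<open>\<alpha> G\<^sub>p(z)\<close>.

  Inside \<open>A\<^sub>f\<close> the orbit eventually stays in \<open>W\<^sub>R\<close>. Invariance of \<open>W\<^sub>R\<close> bounds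
  \<open>q(z, \<cdot>)\<close> from below outside a disc, and the maximum modulus principle for
  \<open>1 / (u\<^sup>d q(z, 1/u))\<close> upgrades this to \<open>\<sigma>\<^sub>n\<^sub>+\<^sub>1 \<ge> \<sigma>\<^sub>n\<^sup>d\<close> for
  \<open>\<sigma>\<^sub>n = |w\<^sub>n| / (R |z\<^sub>n|\<^sup>\<alpha>)\<close>. Hence \<open>\<sigma>\<^sub>n \<rightarrow> \<infinity>\<close>, the dominant monomial takes over, and
  \<open>log |w\<^sub>n\<^sub>+\<^sub>1| \<ge> d log |w\<^sub>n| + \<gamma> log |z\<^sub>n| - log 2\<close>. Since \<open>\<gamma> \<ge> 1\<close> and \<open>log |z\<^sub>n|\<close> grows
  like \<open>d\<^sup>n\<close>, \<open>d\<^sup>-\<^sup>n log |w\<^sub>n|\<close> increases by a fixed positive amount at every step.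
\<close>

lemma logplus_eq_ln: "1 \<le> x \<Longrightarrow> logplus x = ln x"
  by (simp add: logplus_def)

lemma logplus_mono: "0 \<le> x \<Longrightarrow> x \<le> y \<Longrightarrow> logplus x \<le> logplus y"
  using ln_mono[of x y] by (cases "x = 0") (auto simp: logplus_def le_max_iff_disj)

lemma skew_funpow: "(skew p c ^^ n) (z, w) = ((poly p ^^ n) z, Qiter p c n z w)"
  by (induction n) (auto simp: skew_def)

lemma escape_set_eventually_norm_ge:
  assumes "z \<in> escape_set p"
  shows "eventually (\<lambda>n. B \<le> cmod ((poly p ^^ n) z)) sequentially"
  using filterlim_at_infinity_imp_norm_at_top[of "\<lambda>n. (poly p ^^ n) z"] assms
  by (auto simp: escape_set_def filterlim_at_top)

lemma monic_poly_norm_bounds: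
  fixes p :: "complex poly"
  assumes p_deg: "degree p = d" and p_monic: "lead_coeff p = 1" and d1: "d \<ge> 1"
  obtains Z where "\<And>z. Z \<le> cmod z \<Longrightarrow> cmod z ^ d / 2 \<le> cmod (poly p z) \<and> cmod (poly p z) \<le> 2 * cmod z ^ d"
proof -
  define C where "C = (\<Sum>i<d. cmod (coeff p i))"
  have C0: "C \<ge> 0" unfolding C_def by (simp add: sum_nonneg)
  have near: "cmod (poly p z - z ^ d) \<le> cmod z ^ d / 2" if z: "2 * C + 1 \<le> cmod z" for z
  proof -
    have z1: "1 \<le> cmod z" using z C0 by simp
    have "poly p z = (\<Sum>i<d. coeff p i * z ^ i) + z ^ d"
      using p_deg p_monic by (simp add: poly_altdef lessThan_Suc_atMost[symmetric])
    then have "cmod (poly p z - z ^ d) \<le> (\<Sum>i<d. cmod (coeff p i) * cmod z ^ i)"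
      by (metis (no_types, lifting) add_diff_cancel_right' norm_mult norm_power norm_sum sum.cong)
    also have "\<dots> \<le> (\<Sum>i<d. cmod (coeff p i) * cmod z ^ (d - 1))"
      by (intro sum_mono mult_left_mono power_increasing) (use z1 in auto)
    also have "\<dots> = C * cmod z ^ (d - 1)" by (simp add: C_def sum_distrib_right)
    also have "\<dots> \<le> (2 * C) * cmod z ^ (d - 1) / 2" by simp
    also have "\<dots> \<le> cmod z * cmod z ^ (d - 1) / 2"
      using z by (intro divide_right_mono mult_right_mono) auto
    also have "\<dots> = cmod z ^ d / 2"
      using d1 by (cases d) auto
    finally show ?thesis .
  qed
  show ?thesis
  proof (intro that[of "2 * C + 1"])
    fix z assume "2 * C + 1 \<le> cmod z"
    then have "\<bar>cmod (poly p z) - cmod z ^ d\<bar> \<le> cmod z ^ d / 2"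
      using norm_triangle_ineq3[of "poly p z" "z ^ d"] near by (fastforce simp: norm_power)
    then show "cmod z ^ d / 2 \<le> cmod (poly p z) \<and> cmod (poly p z) \<le> 2 * cmod z ^ d"
      using zero_le_power[of "cmod z" d] by arith
  qed
qed

lemma monic_poly_log_growth:
  fixes p :: "complex poly"
  assumes "degree p = d" "lead_coeff p = 1" "d \<ge> 1"
  obtains Z where "Z \<ge> 2"
    "\<And>z. Z \<le> cmod z \<Longrightarrow> \<bar>ln (cmod (poly p z)) - real d * ln (cmod z)\<bar> \<le> ln 2"
proof -
  obtain Z where Z: "\<And>z. Z \<le> cmod z \<Longrightarrow> cmod z ^ d / 2 \<le> cmod (poly p z) \<and> cmod (poly p z) \<le> 2 * cmod z ^ d"
    using monic_poly_norm_bounds assms by blast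
  show ?thesis
  proof (intro that[of "max Z 2"])
    fix z assume z: "max Z 2 \<le> cmod z"
    then have "0 < cmod z" by linarith
    then have pos: "z \<noteq> 0" "0 < cmod z ^ d / 2" by auto
    with Z[of z] z have "0 < cmod (poly p z)" by linarith
    with pos Z[of z] z have "ln (cmod z ^ d / 2) \<le> ln (cmod (poly p z))"
      "ln (cmod (poly p z)) \<le> ln (2 * cmod z ^ d)"
      by (auto intro!: ln_mono)
    moreover have "ln (cmod z ^ d / 2) = real d * ln (cmod z) - ln 2"
      "ln (2 * cmod z ^ d) = ln 2 + real d * ln (cmod z)"
      using pos by (simp_all add: ln_div ln_mult ln_realpow)
    ultimately show "\<bar>ln (cmod (poly p z)) - real d * ln (cmod z)\<bar> \<le> ln 2"
      by arith
  qed simp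
qed

lemma Green_p_tendsto:
  fixes p :: "complex poly"
  assumes d2: "d \<ge> 2" and p_deg: "degree p = d" and p_monic: "lead_coeff p = 1"
    and esc: "z \<in> escape_set p"
  shows "(\<lambda>n. logplus (cmod ((poly p ^^ n) z)) / real d ^ n) \<longlonglongrightarrow> Green_p p d z"
proof -
  obtain Z where Z: "Z \<ge> 2"
    "\<And>u. Z \<le> cmod u \<Longrightarrow> \<bar>ln (cmod (poly p u)) - real d * ln (cmod u)\<bar> \<le> ln 2"
    using monic_poly_log_growth[OF p_deg p_monic] d2 by (metis one_le_numeral order_trans)
  define X where "X n = logplus (cmod ((poly p ^^ n) z)) / real d ^ n" for n
  obtain N where N: "\<And>n. n \<ge> N \<Longrightarrow> Z \<le> cmod ((poly p ^^ n) z)"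
    using escape_set_eventually_norm_ge[OF esc] by (auto simp: eventually_sequentially)
  have "norm (X (Suc n) - X n) \<le> ln 2 * (1 / real d) ^ n" if "n \<ge> N" for n
  proof -
    let ?u = "(poly p ^^ n) z"
    have "X (Suc n) - X n = (ln (cmod (poly p ?u)) - real d * ln (cmod ?u)) / real d ^ Suc n"
      using N[of n] N[of "Suc n"] that Z(1) d2 by (simp add: X_def logplus_eq_ln field_simps)
    then have "norm (X (Suc n) - X n) \<le> ln 2 / real d ^ Suc n"
      using Z(2)[OF N[OF that]] by (simp add: abs_divide divide_right_mono)
    also have "\<dots> \<le> ln 2 / real d ^ n"
      using d2 by (intro divide_left_mono power_increasing) auto
    finally show ?thesis by (simp add: power_one_over)
  qed
  then have "summable (\<lambda>n. X (Suc n) - X n)"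
    using d2 by (intro summable_comparison_test'[OF summable_mult[OF summable_geometric]]) auto
  then have "(\<lambda>n. X n - X 0) \<longlonglongrightarrow> (\<Sum>n. X (Suc n) - X n)"
    using summable_LIMSEQ by (force simp: sum_lessThan_telescope)
  then have "convergent X"
    by (metis (no_types) convergent_def convergent_diff_const_right_iff)
  then show ?thesis
    by (simp add: Green_p_def X_def[abs_def] convergent_LIMSEQ_iff)
qed

lemma escape_set_funpow_iff: "(poly p ^^ m) z \<in> escape_set p \<longleftrightarrow> z \<in> escape_set p"
proof -
  have "(poly p ^^ n) ((poly p ^^ m) z) = (poly p ^^ (n + m)) z" for n
    by (simp add: funpow_add)
  moreover have "eventually (\<lambda>n. P ((poly p ^^ (n + m)) z)) sequentially
      \<longleftrightarrow> eventually (\<lambda>n. P ((poly p ^^ n) z)) sequentially" for P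
    using eventually_sequentially_seg[of "\<lambda>n. P ((poly p ^^ n) z)" m] by simp
  ultimately show ?thesis
    by (simp add: escape_set_def filterlim_iff)
qed

lemma skew_funpow_W_R_invariant:
  assumes "skew p c ` W_R R a \<subseteq> W_R R a" "x \<in> W_R R a"
  shows "(skew p c ^^ k) x \<in> W_R R a"
  using assms by (induction k) auto

lemma A_f_eventually_W_R:
  assumes W_inv: "skew p c ` W_R R a \<subseteq> W_R R a" and A: "(z, w) \<in> A_f p c R a"
  shows "eventually (\<lambda>n. ((poly p ^^ n) z, Qiter p c n z w) \<in> W_R R a) sequentially"
proof -
  obtain N where N: "(skew p c ^^ N) (z, w) \<in> W_R R a"
    using A by (auto simp: A_f_def)
  have "(skew p c ^^ n) (z, w) \<in> W_R R a" if "n \<ge> N" for n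
    using skew_funpow_W_R_invariant[OF W_inv N, of "n - N"] that
    by (metis comp_apply funpow_add le_add_diff_inverse2)
  then show ?thesis
    by (auto simp: eventually_sequentially skew_funpow)
qed

lemma A_f_escape:
  assumes "skew p c ` W_R R a \<subseteq> W_R R a" "W_R R a \<subseteq> escape_set p \<times> UNIV"
    and "(z, w) \<in> A_f p c R a"
  shows "z \<in> escape_set p"
  using A_f_eventually_W_R[OF assms(1,3)] assms(2) escape_set_funpow_iff
  by (force simp: eventually_sequentially)

lemma power_recursion_at_top:
  fixes \<sigma> :: "nat \<Rightarrow> real"
  assumes d2: "d \<ge> 2" and gt1: "1 < \<sigma> N" and rec: "\<And>n. N \<le> n \<Longrightarrow> \<sigma> n ^ d \<le> \<sigma> (Suc n)"
  shows "filterlim \<sigma> at_top sequentially"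
proof -
  have grow: "\<sigma> N ^ Suc k \<le> \<sigma> (N + k)" for k
  proof (induction k)
    case (Suc k)
    have "\<sigma> N ^ Suc (Suc k) \<le> \<sigma> N ^ (Suc k * d)"
      using gt1 d2 mult_le_mono2[OF d2, of "Suc k"] by (intro power_increasing) auto
    also have "\<dots> = (\<sigma> N ^ Suc k) ^ d"
      by (simp only: power_mult)
    also have "\<dots> \<le> \<sigma> (N + k) ^ d"
      using Suc.IH gt1 by (intro power_mono) auto
    also have "\<dots> \<le> \<sigma> (N + Suc k)"
      using rec[of "N + k"] by simp
    finally show ?case .
  qed simp
  show ?thesis
    unfolding filterlim_at_top eventually_sequentially
  proof
    fix K
    obtain k where k: "K < \<sigma> N ^ k"
      using real_arch_pow[OF gt1] by blast
    have "K \<le> \<sigma> n" if "N + k \<le> n" for n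
    proof -
      have "\<sigma> N ^ k \<le> \<sigma> N ^ Suc (n - N)"
        using gt1 that by (intro power_increasing) auto
      also have "\<dots> \<le> \<sigma> n"
        using grow[of "n - N"] that by simp
      finally show ?thesis using k by simp
    qed
    then show "\<exists>M. \<forall>n\<ge>M. K \<le> \<sigma> n" by blast
  qed
qed

lemma increment_at_top:
  fixes A :: "nat \<Rightarrow> real"
  assumes g: "g > 0" and inc: "\<And>n. N \<le> n \<Longrightarrow> A n + g \<le> A (Suc n)"
  shows "filterlim A at_top sequentially"
proof -
  have grow: "A N + real k * g \<le> A (N + k)" for k
  proof (induction k)
    case (Suc k)
    then show ?case using inc[of "N + k"] by (simp add: algebra_simps)
  qed simp
  show ?thesis
    unfolding filterlim_at_top eventually_sequentially
  proof
    fix K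
    obtain k where k: "(K - A N) / g \<le> real k"
      using real_arch_simple by blast
    have "K \<le> A n" if "N + k \<le> n" for n
    proof -
      have "K \<le> A N + real k * g"
        using k g by (simp add: pos_divide_le_eq algebra_simps)
      also have "\<dots> \<le> A N + real (n - N) * g"
        using that g by (intro add_left_mono mult_right_mono) auto
      also have "\<dots> \<le> A n"
        using grow[of "n - N"] that by simp
      finally show ?thesis .
    qed
    then show "\<exists>M. \<forall>n\<ge>M. K \<le> A n" by blast
  qed
qed

lemma divide_power_at_top_of_recursion:
  fixes L x :: "nat \<Rightarrow> real" and d :: real
  assumes d: "d > 0" and x0: "0 < x N"
    and x_rec: "\<And>n. N \<le> n \<Longrightarrow> d * x n \<le> x (Suc n)"
    and L_rec: "\<And>n. N \<le> n \<Longrightarrow> d * L n + x n \<le> L (Suc n)"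
  shows "filterlim (\<lambda>n. L n / d ^ n) at_top sequentially"
proof (rule increment_at_top[where g = "x N / d ^ Suc N" and N = N])
  show "0 < x N / d ^ Suc N"
    using d x0 by simp
  fix n assume n: "N \<le> n"
  have "x N / d ^ Suc N \<le> x n / d ^ Suc n"
    using n
  proof (induction n rule: dec_induct)
    case (step m)
    have "x m / d ^ Suc m = d * x m / d ^ Suc (Suc m)"
      using d by simp
    also have "\<dots> \<le> x (Suc m) / d ^ Suc (Suc m)"
      using x_rec[OF step.hyps(1)] d by (intro divide_right_mono) auto
    finally show ?case
      using step.IH by simp
  qed simp
  also have "\<dots> \<le> L (Suc n) / d ^ Suc n - L n / d ^ n"
    using L_rec[OF n] d by (simp add: field_simps)
  finally show "L n / d ^ n + x N / d ^ Suc N \<le> L (Suc n) / d ^ Suc n"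
    by simp
qed

lemma B_f_limsup_le:
  fixes p :: "complex poly"
  assumes d2: "d \<ge> 2" and p_deg: "degree p = d" and p_monic: "lead_coeff p = 1"
    and R1: "R > 1" and a0: "a \<ge> 0" and B: "(z, w) \<in> B_f p c R a"
  shows "limsup (\<lambda>n. ereal (logplus (cmod (Qiter p c n z w)) / real d ^ n))
    \<le> ereal (a * Green_p p d z)"
proof -
  define X where "X n = logplus (cmod ((poly p ^^ n) z)) / real d ^ n" for n
  have esc: "z \<in> escape_set p"
    and outside: "\<And>n. ((poly p ^^ n) z, Qiter p c n z w) \<notin> W_R R a"
    using B by (auto simp: B_f_def A_f_def skew_funpow)
  have bound: "logplus (cmod (Qiter p c n z w)) / real d ^ n \<le> ln R / real d ^ n + a * X n"
    if big: "R + 1 \<le> cmod ((poly p ^^ n) z)" for n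
  proof -
    let ?z = "cmod ((poly p ^^ n) z)"
    have "1 \<le> ?z powr a"
      using big R1 a0 by (intro ge_one_powr_ge_zero) auto
    then have one: "1 \<le> R * ?z powr a"
      using R1 mult_mono[of 1 R 1 "?z powr a"] by simp
    have "logplus (cmod (Qiter p c n z w)) \<le> logplus (R * ?z powr a)"
      using outside[of n] big by (intro logplus_mono) (auto simp: W_R_def)
    also have "\<dots> = ln (R * ?z powr a)"
      using one by (rule logplus_eq_ln)
    also have "\<dots> = ln R + a * logplus ?z"
      using R1 big by (simp add: ln_mult ln_powr logplus_eq_ln[of ?z] flip: zero_less_norm_iff)
    finally have "logplus (cmod (Qiter p c n z w)) / real d ^ n \<le> (ln R + a * logplus ?z) / real d ^ n"
      by (rule divide_right_mono) simp
    then show ?thesis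
      by (simp add: X_def add_divide_distrib)
  qed
  have "(\<lambda>n. inverse (real d ^ n)) \<longlonglongrightarrow> 0"
    using d2 by (intro LIMSEQ_inverse_realpow_zero) auto
  then have lim: "(\<lambda>n. ln R / real d ^ n + a * X n) \<longlonglongrightarrow> ln R * 0 + a * Green_p p d z"
    using Green_p_tendsto[OF d2 p_deg p_monic esc] unfolding X_def divide_inverse
    by (intro tendsto_add tendsto_mult_left)
  have "limsup (\<lambda>n. ereal (logplus (cmod (Qiter p c n z w)) / real d ^ n))
      \<le> limsup (\<lambda>n. ereal (ln R / real d ^ n + a * X n))"
    using escape_set_eventually_norm_ge[OF esc, of "R + 1"]
    by (intro Limsup_mono) (auto elim!: eventually_mono bound)
  also have "\<dots> = ereal (a * Green_p p d z)"
    using lim by (intro lim_imp_Limsup) (auto intro: tendsto_ereal)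
  finally show ?thesis .
qed

text \<open>The fiber polynomial \<open>q(z, w) = \<Sum> c i j z\<^sup>i w\<^sup>j\<close> has \<open>w\<close>-degree \<open>d\<close> and leading
  coefficient \<open>b(z) = z\<^sup>\<gamma> + \<dots>\<close>; \<open>a\<close> is any upper bound for the exponents
  \<open>(n\<^sub>j - \<gamma>) / (d - m\<^sub>j)\<close>, such as \<open>\<alpha>\<close>.\<close>

locale fiber_polynomial =
  fixes c :: "nat \<Rightarrow> nat \<Rightarrow> complex" and d \<gamma> :: nat and a :: real
  assumes finite_support: "finite {(i,j). c i j \<noteq> 0}"
    and degree_w: "\<And>i j. d < j \<Longrightarrow> c i j = 0"
    and lead_coeff_one: "c \<gamma> d = 1"
    and lead_degree: "\<And>i. \<gamma> < i \<Longrightarrow> c i d = 0"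
    and gamma_ge_1: "\<gamma> \<ge> 1"
    and alpha_ge: "\<And>i j. c i j \<noteq> 0 \<Longrightarrow> j < d \<Longrightarrow> (real i - real \<gamma>) / (real d - real j) \<le> a"
begin

definition lower_terms :: "(nat \<times> nat) set" where
  "lower_terms = {(i,j). c i j \<noteq> 0} - {(\<gamma>, d)}"

definition lower_norm :: real where
  "lower_norm = (\<Sum>(i,j)\<in>lower_terms. cmod (c i j))"

definition reciprocal :: "complex \<Rightarrow> complex poly" where
  "reciprocal z = (\<Sum>(i,j)\<in>{(i,j). c i j \<noteq> 0}. monom (c i j * z ^ i) (d - j))"

lemma lower_norm_nonneg: "lower_norm \<ge> 0"
  unfolding lower_norm_def by (intro sum_nonneg) auto

lemma lower_terms_cases:
  assumes "(i, j) \<in> lower_terms"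
  shows "c i j \<noteq> 0 \<and> (j < d \<or> j = d \<and> i < \<gamma>)"
proof -
  have "c i j \<noteq> 0" "(i, j) \<noteq> (\<gamma>, d)"
    using assms by (auto simp: lower_terms_def)
  moreover have "j \<le> d" "j = d \<Longrightarrow> i \<le> \<gamma>"
    using degree_w lead_degree \<open>c i j \<noteq> 0\<close> not_le by blast+
  ultimately show ?thesis
    by auto
qed

lemma sum_support_split:
  "(\<Sum>(i,j)\<in>{(i,j). c i j \<noteq> 0}. c i j * g i j) = g \<gamma> d + (\<Sum>(i,j)\<in>lower_terms. c i j * g i j)"
proof -
  have "(\<gamma>, d) \<in> {(i,j). c i j \<noteq> 0}"
    using lead_coeff_one by simp
  then have "(\<Sum>(i,j)\<in>{(i,j). c i j \<noteq> 0}. c i j * g i j)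
      = c \<gamma> d * g \<gamma> d + (\<Sum>(i,j)\<in>lower_terms. c i j * g i j)"
    unfolding lower_terms_def by (subst sum.remove[OF finite_support]) auto
  then show ?thesis
    using lead_coeff_one by simp
qed

lemma norm_lower_sum_le:
  assumes "\<And>i j. (i, j) \<in> lower_terms \<Longrightarrow> cmod (g i j) \<le> B"
  shows "cmod (\<Sum>(i,j)\<in>lower_terms. c i j * g i j) \<le> lower_norm * B"
proof -
  have "cmod (\<Sum>(i,j)\<in>lower_terms. c i j * g i j) \<le> (\<Sum>(i,j)\<in>lower_terms. cmod (c i j) * B)"
    using assms by (auto intro!: order_trans[OF norm_sum] sum_mono mult_left_mono simp: norm_mult)
  then show ?thesis
    by (simp add: lower_norm_def sum_distrib_right case_prod_unfold)
qed

lemma qeval_split: "qeval c z w = z ^ \<gamma> * w ^ d + (\<Sum>(i,j)\<in>lower_terms. c i j * (z ^ i * w ^ j))"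
  unfolding qeval_def using sum_support_split[of "\<lambda>i j. z ^ i * w ^ j"] by (simp add: mult.assoc)

lemma lead_degree_term_bound:
  assumes "i < \<gamma>" and "cmod z \<ge> 1"
  shows "cmod z ^ i * cmod w ^ d \<le> cmod z ^ \<gamma> * cmod w ^ d * (1 / cmod z)"
proof -
  have "cmod z * cmod z ^ i \<le> cmod z ^ \<gamma>"
    using assms power_increasing[of "Suc i" \<gamma> "cmod z"] by simp
  moreover have "0 < cmod z"
    using assms(2) by linarith
  ultimately have "cmod z ^ i \<le> cmod z ^ \<gamma> * (1 / cmod z)"
    by (simp add: pos_le_divide_eq mult.commute)
  then have "cmod z ^ i * cmod w ^ d \<le> cmod z ^ \<gamma> * (1 / cmod z) * cmod w ^ d"
    by (rule mult_right_mono) simp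
  then show ?thesis
    by (simp add: ac_simps)
qed

lemma lower_w_degree_term_bound:
  assumes "c i j \<noteq> 0" and "j < d" and z1: "cmod z \<ge> 1" and wz: "cmod w \<ge> cmod z powr a"
  shows "cmod z ^ i * cmod w ^ j \<le> cmod z ^ \<gamma> * cmod w ^ d * (cmod z powr a / cmod w)"
proof -
  have zp: "cmod z > 0" and wp: "cmod w > 0"
    using z1 wz by (auto intro: less_le_trans[OF powr_gt_zero[THEN iffD2]])
  define x where "x = ln (cmod z)"
  define y where "y = ln (cmod w)"
  have x0: "x \<ge> 0"
    using z1 by (simp add: x_def)
  have yax: "a * x \<le> y"
    using ln_mono[OF wz] zp by (simp add: x_def y_def ln_powr)
  have "real i - real \<gamma> \<le> a * (real d - real j)"
    using alpha_ge[OF assms(1,2)] assms(2) by (simp add: divide_le_eq)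
  then have "(real i - real \<gamma> - a) * x \<le> (a * (real d - real j) - a) * x"
    using x0 by (intro mult_right_mono) auto
  also have "\<dots> = (real d - real j - 1) * (a * x)"
    by (simp add: algebra_simps)
  also have "\<dots> \<le> (real d - real j - 1) * y"
    using yax assms(2) by (intro mult_left_mono) auto
  finally have "exp (real i * x + real j * y) \<le> exp (real \<gamma> * x + real d * y + a * x - y)"
    by (simp add: algebra_simps)
  moreover have "exp x = cmod z" "exp y = cmod w"
    using zp wp by (simp_all add: x_def y_def)
  ultimately show ?thesis
    using zp wp by (simp add: exp_add exp_diff exp_of_nat_mult exp_of_nat2_mult powr_def x_def mult.commute)
qed

lemma lower_term_bound:
  assumes ij: "(i, j) \<in> lower_terms" and z1: "cmod z \<ge> 1" and wz: "cmod w \<ge> cmod z powr a"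
  shows "cmod (z ^ i * w ^ j) \<le> cmod z ^ \<gamma> * cmod w ^ d * (1 / cmod z + cmod z powr a / cmod w)"
proof -
  have "cmod z ^ i * cmod w ^ j \<le> cmod z ^ \<gamma> * cmod w ^ d * (1 / cmod z)
      \<or> cmod z ^ i * cmod w ^ j \<le> cmod z ^ \<gamma> * cmod w ^ d * (cmod z powr a / cmod w)"
    using lower_terms_cases[OF ij]
  proof (elim conjE disjE)
    assume "j = d" "i < \<gamma>"
    then show ?thesis
      using lead_degree_term_bound[OF _ z1] by simp
  next
    assume "c i j \<noteq> 0" "j < d"
    then show ?thesis
      using lower_w_degree_term_bound[OF _ _ z1 wz] by simp
  qed
  moreover have "0 \<le> cmod z ^ \<gamma> * cmod w ^ d * (cmod z powr a / cmod w)"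
    "0 \<le> cmod z ^ \<gamma> * cmod w ^ d * (1 / cmod z)"
    by simp_all
  ultimately have "cmod z ^ i * cmod w ^ j
      \<le> cmod z ^ \<gamma> * cmod w ^ d * (1 / cmod z) + cmod z ^ \<gamma> * cmod w ^ d * (cmod z powr a / cmod w)"
    by linarith
  then show ?thesis
    by (simp only: norm_mult norm_power distrib_left)
qed

lemma qeval_lower_bound:
  assumes z: "cmod z \<ge> 4 * lower_norm + 1" and w: "cmod w \<ge> (4 * lower_norm + 1) * cmod z powr a"
  shows "cmod (qeval c z w) \<ge> cmod z ^ \<gamma> * cmod w ^ d / 2"
proof -
  define K where "K = 4 * lower_norm + 1"
  define T where "T = cmod z ^ \<gamma> * cmod w ^ d"
  have K1: "K \<ge> 1"
    using lower_norm_nonneg by (simp add: K_def)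
  have z1: "cmod z \<ge> 1"
    using z K1 unfolding K_def[symmetric] by linarith
  then have zp: "cmod z powr a > 0"
    by auto
  have "cmod z powr a \<le> K * cmod z powr a"
    using K1 zp by simp
  then have wz: "cmod w \<ge> cmod z powr a"
    using w unfolding K_def by linarith
  have wp: "cmod w > 0"
    using wz zp by linarith
  have "1 / cmod z \<le> 1 / K"
    using z K1 unfolding K_def[symmetric] by (simp add: frac_le)
  moreover have "cmod z powr a / cmod w \<le> 1 / K"
    using w wp K1 unfolding K_def[symmetric] by (simp add: field_simps)
  ultimately have "lower_norm * (T * (1 / cmod z + cmod z powr a / cmod w)) \<le> lower_norm * (T * (2 / K))"
    using lower_norm_nonneg by (intro mult_left_mono) (auto simp: T_def)
  also have "\<dots> \<le> T / 2"
    using lower_norm_nonneg K1 by (simp add: K_def T_def field_simps)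
  finally have bound: "lower_norm * (T * (1 / cmod z + cmod z powr a / cmod w)) \<le> T / 2" .
  have "cmod (\<Sum>(i,j)\<in>lower_terms. c i j * (z ^ i * w ^ j))
      \<le> lower_norm * (T * (1 / cmod z + cmod z powr a / cmod w))"
    using lower_term_bound[OF _ z1 wz] unfolding T_def by (rule norm_lower_sum_le)
  moreover have "T - cmod (\<Sum>(i,j)\<in>lower_terms. c i j * (z ^ i * w ^ j)) \<le> cmod (qeval c z w)"
    unfolding qeval_split using norm_diff_ineq[of "z ^ \<gamma> * w ^ d"] by (simp add: T_def norm_mult norm_power)
  ultimately show ?thesis
    using bound unfolding T_def by linarith
qed

lemma ln_qeval_lower_bound:
  assumes z: "cmod z \<ge> 4 * lower_norm + 1" and w: "cmod w \<ge> (4 * lower_norm + 1) * cmod z powr a"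
  shows "real d * ln (cmod w) + ln (cmod z) - ln 2 \<le> ln (cmod (qeval c z w))"
proof -
  have z1: "1 \<le> cmod z"
    using z lower_norm_nonneg by linarith
  then have "z \<noteq> 0" "0 < cmod z powr a"
    by auto
  moreover have "0 < 4 * lower_norm + 1"
    using lower_norm_nonneg by linarith
  ultimately have "0 < cmod w"
    using w by (meson mult_pos_pos less_le_trans)
  then have pos: "0 < cmod z ^ \<gamma> * cmod w ^ d / 2"
    using \<open>z \<noteq> 0\<close> by simp
  have "1 * ln (cmod z) \<le> real \<gamma> * ln (cmod z)"
    using gamma_ge_1 z1 by (intro mult_right_mono) auto
  also have "\<dots> + real d * ln (cmod w) - ln 2 = ln (cmod z ^ \<gamma> * cmod w ^ d / 2)"
    using \<open>z \<noteq> 0\<close> \<open>0 < cmod w\<close> by (simp add: ln_div ln_mult ln_realpow)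
  also have "\<dots> \<le> ln (cmod (qeval c z w))"
    using qeval_lower_bound[OF z w] pos by (rule ln_mono)
  finally show ?thesis
    by simp
qed

lemma poly_reciprocal_sum:
  "poly (reciprocal z) u = (\<Sum>(i,j)\<in>{(i,j). c i j \<noteq> 0}. c i j * (z ^ i * u ^ (d - j)))"
  unfolding reciprocal_def by (simp add: poly_sum poly_monom case_prod_unfold mult.assoc)

lemma poly_reciprocal:
  assumes "u \<noteq> 0"
  shows "poly (reciprocal z) u = u ^ d * qeval c z (1 / u)"
proof -
  have "u ^ (d - j) = u ^ d * (1 / u) ^ j" if "c i j \<noteq> 0" for i j
  proof -
    have "j \<le> d"
      using that degree_w[of j i] by fastforce
    then show ?thesis
      using assms by (simp add: power_diff power_one_over divide_inverse power_inverse)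
  qed
  then show ?thesis
    unfolding poly_reciprocal_sum qeval_def sum_distrib_left
    by (intro sum.cong) (auto simp: algebra_simps)
qed

lemma poly_reciprocal_0_nonzero:
  assumes z: "cmod z \<ge> lower_norm + 1"
  shows "poly (reciprocal z) 0 \<noteq> 0"
proof -
  define S where "S = (\<Sum>(i,j)\<in>lower_terms. c i j * (z ^ i * 0 ^ (d - j)))"
  have z1: "cmod z \<ge> 1"
    using z lower_norm_nonneg by linarith
  have "cmod (z ^ i * 0 ^ (d - j)) \<le> cmod z ^ (\<gamma> - 1)" if "(i, j) \<in> lower_terms" for i j
    using lower_terms_cases[OF that] z1 power_increasing[of i "\<gamma> - 1" "cmod z"]
    by (auto simp: norm_mult norm_power power_0_left)
  then have "cmod S \<le> lower_norm * cmod z ^ (\<gamma> - 1)"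
    unfolding S_def by (rule norm_lower_sum_le)
  also have "\<dots> < cmod z * cmod z ^ (\<gamma> - 1)"
    using z z1 by (intro mult_strict_right_mono zero_less_power) auto
  also have "\<dots> = cmod (z ^ \<gamma>)"
    using gamma_ge_1 by (simp add: norm_power flip: power_Suc)
  finally have "z ^ \<gamma> \<noteq> - S"
    by auto
  then show ?thesis
    unfolding poly_reciprocal_sum sum_support_split S_def[symmetric] by (simp add: eq_neg_iff_add_eq_0)
qed

lemma poly_reciprocal_norm_ge:
  assumes far: "\<And>v. \<rho> < cmod v \<Longrightarrow> M \<le> cmod (qeval c z v)"
    and u: "u \<noteq> 0" "\<rho> * cmod u < 1"
  shows "M * cmod u ^ d \<le> cmod (poly (reciprocal z) u)"
proof -
  have "\<rho> < cmod (1 / u)"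
    using u by (simp add: norm_divide field_simps)
  then show ?thesis
    using mult_right_mono[OF far, of "1 / u" "cmod u ^ d"] poly_reciprocal[OF u(1)]
    by (simp add: norm_mult norm_power mult.commute)
qed

lemma poly_reciprocal_norm_ge_on_disc:
  assumes \<rho>: "\<rho> > 0" and M: "M > 0" and rec0: "poly (reciprocal z) 0 \<noteq> 0"
    and far: "\<And>v. \<rho> < cmod v \<Longrightarrow> M \<le> cmod (qeval c z v)"
    and r: "0 < r" "\<rho> * r < 1" and u0: "cmod u0 \<le> r"
  shows "M * r ^ d \<le> cmod (poly (reciprocal z) u0)"
proof -
  define h where "h = reciprocal z"
  have far_u: "M * cmod u ^ d \<le> cmod (poly h u)" if "u \<noteq> 0" "cmod u \<le> r" for u
  proof -
    have "\<rho> * cmod u \<le> \<rho> * r"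
      using that(2) \<rho> by simp
    then show ?thesis
      unfolding h_def using poly_reciprocal_norm_ge[OF far that(1)] r(2) by simp
  qed
  have nz: "poly h u \<noteq> 0" if "u \<in> cball 0 r" for u
  proof (cases "u = 0")
    case False
    then have "0 < M * cmod u ^ d"
      using M by simp
    then show ?thesis
      using far_u[of u] False that by auto
  qed (use rec0 h_def in simp)
  have "norm (inverse (poly h u0)) \<le> inverse (M * r ^ d)"
  proof (rule maximum_modulus_frontier[where f = "\<lambda>u. inverse (poly h u)" and S = "cball 0 r"])
    show "(\<lambda>u. inverse (poly h u)) holomorphic_on interior (cball 0 r)"
      using nz by (auto intro!: holomorphic_intros)
    show "continuous_on (closure (cball 0 r)) (\<lambda>u. inverse (poly h u))"
      using nz by (auto intro!: continuous_intros)
    show "norm (inverse (poly h u)) \<le> inverse (M * r ^ d)" if "u \<in> frontier (cball 0 r)" for u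
    proof -
      have "cmod u = r" "u \<noteq> 0"
        using that r by auto
      then have "M * r ^ d \<le> cmod (poly h u)" "0 < M * r ^ d"
        using far_u[of u] M r by auto
      then show ?thesis
        unfolding norm_inverse by (rule le_imp_inverse_le)
    qed
  qed (use u0 in auto)
  then show ?thesis
    using nz[of u0] u0 M r by (simp add: h_def norm_inverse inverse_le_imp_le)
qed

text \<open>A Schwarz-lemma type estimate: a lower bound for \<open>q(z,\<cdot>)\<close> outside a disc of radius
  \<open>\<rho>\<close> improves by the factor \<open>(cmod w / \<rho>) ^ d\<close>, because \<open>reciprocal z\<close> has no zeros on the
  disc \<open>cmod u < 1 / \<rho>\<close>.\<close>

lemma qeval_norm_ge_power_ratio:
  assumes \<rho>: "\<rho> > 0" and M: "M > 0" and rec0: "poly (reciprocal z) 0 \<noteq> 0"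
    and far: "\<And>v. \<rho> < cmod v \<Longrightarrow> M \<le> cmod (qeval c z v)"
    and w: "\<rho> < cmod w"
  shows "M * (cmod w / \<rho>) ^ d \<le> cmod (qeval c z w)"
proof -
  have w0: "w \<noteq> 0"
    using w \<rho> by auto
  then have u0: "cmod (1 / w) < 1 / \<rho>"
    using w \<rho> by (simp add: norm_divide field_simps)
  have "M * (1 / \<rho>) ^ d \<le> cmod (poly (reciprocal z) (1 / w))"
  proof (rule tendsto_le[OF trivial_limit_at_left_real tendsto_const])
    show "((\<lambda>r. M * r ^ d) \<longlongrightarrow> M * (1 / \<rho>) ^ d) (at_left (1 / \<rho>))"
      by (intro tendsto_intros)
    have "M * r ^ d \<le> cmod (poly (reciprocal z) (1 / w))" if r: "r \<in> {cmod (1 / w)<..<1 / \<rho>}" for r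
    proof (rule poly_reciprocal_norm_ge_on_disc[OF \<rho> M rec0 far])
      show "0 < r"
        using r le_less_trans[OF norm_ge_zero] by auto
      show "\<rho> * r < 1"
        using r \<rho> by (simp add: pos_less_divide_eq mult.commute)
    qed (use r in auto)
    then show "eventually (\<lambda>r. M * r ^ d \<le> cmod (poly (reciprocal z) (1 / w))) (at_left (1 / \<rho>))"
      using eventually_at_left_real[OF u0] by (auto elim!: eventually_mono)
  qed
  also have "cmod (poly (reciprocal z) (1 / w)) = cmod (qeval c z w) / cmod w ^ d"
    using poly_reciprocal[of "1 / w" z] w0 by (simp add: norm_mult norm_power norm_divide power_one_over)
  finally have "M * (1 / \<rho>) ^ d * cmod w ^ d \<le> cmod (qeval c z w)"
    using w0 by (simp add: pos_le_divide_eq)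
  then show ?thesis
    by (simp add: power_divide)
qed

lemma qeval_ratio_bound_in_W_R:
  fixes p :: "complex poly"
  assumes R0: "R > 0" and W_inv: "skew p c ` W_R R a \<subseteq> W_R R a"
    and zw: "(z, w) \<in> W_R R a" and rec0: "poly (reciprocal z) 0 \<noteq> 0"
  shows "R * cmod (poly p z) powr a * (cmod w / (R * cmod z powr a)) ^ d \<le> cmod (qeval c z w)"
proof (rule qeval_norm_ge_power_ratio[OF _ _ rec0])
  have z: "R < cmod z" and w: "R * cmod z powr a < cmod w"
    using zw by (auto simp: W_R_def)
  have image: "R < cmod (poly p z) \<and> R * cmod (poly p z) powr a < cmod (qeval c z v)"
    if "R * cmod z powr a < cmod v" for v
    using W_inv z that by (force simp: W_R_def skew_def)
  show "0 < R * cmod z powr a"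
    using z R0 by (intro mult_pos_pos) auto
  show "0 < R * cmod (poly p z) powr a"
    using image[OF w] R0 by (intro mult_pos_pos) auto
  show "R * cmod (poly p z) powr a \<le> cmod (qeval c z v)" if "R * cmod z powr a < cmod v" for v
    using image[OF that] by simp
  show "R * cmod z powr a < cmod w"
    by (fact w)
qed

text \<open>The ratio \<open>\<sigma>\<^sub>n = |w\<^sub>n| / (R |z\<^sub>n|\<^sup>a)\<close> satisfies \<open>\<sigma>\<^sub>n\<^sub>+\<^sub>1 \<ge> \<sigma>\<^sub>n\<^sup>d\<close>, so it tends
  to infinity.\<close>

lemma A_f_eventually_fiber_dominant:
  fixes p :: "complex poly"
  assumes d2: "d \<ge> 2" and R0: "R > 0"
    and W_inv: "skew p c ` W_R R a \<subseteq> W_R R a" and W_esc: "W_R R a \<subseteq> escape_set p \<times> UNIV"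
    and A: "(z, w) \<in> A_f p c R a"
  shows "eventually (\<lambda>n. K * cmod ((poly p ^^ n) z) powr a \<le> cmod (Qiter p c n z w)) sequentially"
proof -
  define zs where "zs n = (poly p ^^ n) z" for n
  define ws where "ws n = Qiter p c n z w" for n
  define \<sigma> where "\<sigma> n = cmod (ws n) / (R * cmod (zs n) powr a)" for n
  have "eventually (\<lambda>n. (zs n, ws n) \<in> W_R R a \<and> lower_norm + 1 \<le> cmod (zs n)) sequentially"
    using A_f_eventually_W_R[OF W_inv A] escape_set_eventually_norm_ge[OF A_f_escape[OF W_inv W_esc A]]
    unfolding zs_def ws_def by (rule eventually_conj)
  then obtain N where N: "\<And>n. N \<le> n \<Longrightarrow> (zs n, ws n) \<in> W_R R a \<and> lower_norm + 1 \<le> cmod (zs n)"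
    by (auto simp: eventually_sequentially)
  have den: "0 < R * cmod (zs n) powr a" if "N \<le> n" for n
    using N[OF that] R0 by (intro mult_pos_pos) (auto simp: W_R_def)
  have "\<sigma> n ^ d \<le> \<sigma> (Suc n)" if "N \<le> n" for n
  proof -
    have "R * cmod (zs (Suc n)) powr a * \<sigma> n ^ d \<le> cmod (ws (Suc n))"
      using qeval_ratio_bound_in_W_R[OF R0 W_inv _ poly_reciprocal_0_nonzero] N[OF that]
      by (simp add: \<sigma>_def zs_def ws_def)
    then show ?thesis
      using den[of "Suc n"] that by (simp add: \<sigma>_def pos_le_divide_eq mult.commute)
  qed
  moreover have "1 < \<sigma> N"
    using N[of N] den[of N] by (simp add: \<sigma>_def W_R_def)
  ultimately have "filterlim \<sigma> at_top sequentially"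
    using power_recursion_at_top[OF d2] by blast
  then have "eventually (\<lambda>n. K / R \<le> \<sigma> n \<and> N \<le> n) sequentially"
    by (simp add: filterlim_at_top eventually_conj eventually_ge_at_top)
  then show ?thesis
  proof (rule eventually_mono)
    fix n assume n: "K / R \<le> \<sigma> n \<and> N \<le> n"
    then have "K / R * (R * cmod (zs n) powr a) \<le> cmod (ws n)"
      using den[of n] by (simp add: \<sigma>_def pos_le_divide_eq)
    then show "K * cmod ((poly p ^^ n) z) powr a \<le> cmod (Qiter p c n z w)"
      using R0 by (simp add: zs_def ws_def)
  qed
qed

lemma A_f_Green_at_top:
  fixes p :: "complex poly"
  assumes d2: "d \<ge> 2" and p_deg: "degree p = d" and p_monic: "lead_coeff p = 1"
    and R0: "R > 0"
    and W_inv: "skew p c ` W_R R a \<subseteq> W_R R a" and W_esc: "W_R R a \<subseteq> escape_set p \<times> UNIV"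
    and A: "(z, w) \<in> A_f p c R a"
  shows "filterlim (\<lambda>n. logplus (cmod (Qiter p c n z w)) / real d ^ n) at_top sequentially"
proof -
  define zs where "zs n = (poly p ^^ n) z" for n
  define ws where "ws n = Qiter p c n z w" for n
  obtain Z where Z: "Z \<ge> 2"
    "\<And>u. Z \<le> cmod u \<Longrightarrow> \<bar>ln (cmod (poly p u)) - real d * ln (cmod u)\<bar> \<le> ln 2"
    using monic_poly_log_growth[OF p_deg p_monic] d2 by (metis one_le_numeral order_trans)
  have "eventually (\<lambda>n. max (4 * lower_norm + 1) (max Z 3) \<le> cmod (zs n)
      \<and> (4 * lower_norm + 1) * cmod (zs n) powr a \<le> cmod (ws n)) sequentially"
    using escape_set_eventually_norm_ge[OF A_f_escape[OF W_inv W_esc A]]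
      A_f_eventually_fiber_dominant[OF d2 R0 W_inv W_esc A]
    unfolding zs_def ws_def by (rule eventually_conj)
  then obtain N where N: "\<And>n. N \<le> n \<Longrightarrow> 4 * lower_norm + 1 \<le> cmod (zs n) \<and> Z \<le> cmod (zs n)
      \<and> 3 \<le> cmod (zs n) \<and> (4 * lower_norm + 1) * cmod (zs n) powr a \<le> cmod (ws n)"
    by (auto simp: eventually_sequentially)
  define l where "l n = ln (cmod (zs n)) - ln 2" for n
  define L where "L n = ln (cmod (ws n))" for n
  have l_rec: "real d * l n \<le> l (Suc n)" if "N \<le> n" for n
  proof -
    have "real d * ln (cmod (zs n)) - ln 2 \<le> ln (cmod (zs (Suc n)))"
      using Z(2)[of "zs n"] N[OF that] by (auto simp: zs_def)
    moreover have "2 * ln 2 \<le> real d * ln 2"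
      using d2 by (intro mult_right_mono) auto
    ultimately show ?thesis
      unfolding l_def right_diff_distrib by linarith
  qed
  have L_rec: "real d * L n + l n \<le> L (Suc n)" if "N \<le> n" for n
    using ln_qeval_lower_bound[of "zs n" "ws n"] N[OF that]
    by (simp add: l_def L_def zs_def ws_def algebra_simps)
  have "2 < cmod (zs N)"
    using N[of N] by linarith
  then have "ln 2 < ln (cmod (zs N))"
    by (subst ln_less_cancel_iff) auto
  then have "0 < l N"
    by (simp add: l_def)
  then have "filterlim (\<lambda>n. L n / real d ^ n) at_top sequentially"
    using d2 l_rec L_rec by (intro divide_power_at_top_of_recursion[of "real d" l N]) auto
  moreover have "L n / real d ^ n \<le> logplus (cmod (ws n)) / real d ^ n" for n
    by (intro divide_right_mono) (auto simp: L_def logplus_def)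
  ultimately show ?thesis
    unfolding ws_def by (auto elim!: filterlim_at_top_mono intro: always_eventually)
qed

end

theorem theorem6p3:
  fixes p :: "complex poly" and c :: "nat \<Rightarrow> nat \<Rightarrow> complex"
    and d \<gamma> :: nat and R :: real
  assumes d2: "d \<ge> 2"
    and p_deg: "degree p = d" and p_monic: "lead_coeff p = 1"
    and c_fin: "finite {(i,j). c i j \<noteq> 0}"
    and c_degw: "\<forall>i j. d < j \<longrightarrow> c i j = 0"
    and b_monic: "c \<gamma> d = 1" and b_deg: "\<forall>i. \<gamma> < i \<longrightarrow> c i d = 0"
    and gamma1: "\<gamma> \<ge> 1"
    and lower_nonempty: "{(i,j). c i j \<noteq> 0 \<and> j < d} \<noteq> {}"
    and alpha_pos: "alpha c d \<gamma> > 0"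
    and R1: "R > 1"
    and W_inv: "skew p c ` W_R R (alpha c d \<gamma>) \<subseteq> W_R R (alpha c d \<gamma>)"
    and W_esc: "W_R R (alpha c d \<gamma>) \<subseteq> escape_set p \<times> UNIV"
  shows "(\<forall>(z,w)\<in>A_f p c R (alpha c d \<gamma>).
            filterlim (\<lambda>n. logplus (cmod (Qiter p c n z w)) / real d ^ n) at_top sequentially)
       \<and> (\<forall>(z,w)\<in>B_f p c R (alpha c d \<gamma>).
            limsup (\<lambda>n. ereal (logplus (cmod (Qiter p c n z w)) / real d ^ n))
              \<le> ereal (alpha c d \<gamma> * Green_p p d z))"
proof -
  \<comment> \<open>\<open>alpha\<close> is only used as an upper bound (\<open>Max_ge\<close>).\<close>
  interpret fiber_polynomial c d \<gamma> "alpha c d \<gamma>"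
  proof
    have "finite {(i,j). c i j \<noteq> 0 \<and> j < d}"
      by (rule finite_subset[OF _ c_fin]) auto
    then show "(real i - real \<gamma>) / (real d - real j) \<le> alpha c d \<gamma>" if "c i j \<noteq> 0" "j < d" for i j
      unfolding alpha_def using that by (intro Max_ge finite_imageI) force+
  qed (use c_fin c_degw b_monic b_deg gamma1 in auto)
  show ?thesis
    using A_f_Green_at_top[OF d2 p_deg p_monic _ W_inv W_esc]
      B_f_limsup_le[OF d2 p_deg p_monic R1] alpha_pos R1
    by auto
qed

end
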